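(* Let $d \geq 3$, let $C \subset \mathbb{R}^d$ be a smooth $d$-dimensional combinatorial cube with faces labeled $F_I^J$ via a fixed face-poset isomorphism with $[0,1]^d$, and let $x,y,z \in \{1,\dots,d\}$ be distinct. Suppose that the faces $F_{xz}$ and $F_{x\bar z}$ are parallel and that the faces $F_{yz}$ and $F_{y\bar z}$ are parallel. Then $F_z$ is parallel to $F_{\bar z}$.
   Context: A lattice polytope is the convex hull of finitely many points of $\mathbb{Z}^d$. A $d$-dimensional polytope is simple if each vertex lies in exactly $d$ edges; the primitive edge directions at a vertex are the smallest lattice vectors along its incident edges; a $d$-dimensional lattice polytope in $\mathbb{R}^d$ is smooth if it is simple and at every vertex the primitive edge directions form a basis of $\mathbb{Z}^d$. A $d$-dimensional combinatorial cube is a polytope $C$ whose face poset is isomorphic to that of $[0,1]^d$. For disjoint $I,J \subseteq \{1,\dots,d\}$ the face of $[0,1]^d$ given by $x_k=0$ for $k\in I$ and $x_k = 1$ for $k \in J$ is denoted $F_I^J$, and the corresponding face of $C$ under the fixed isomorphism is also denoted $F_I^J$. Notation: elements of $J$ are written with a bar and elements of $I$ without, e.g. $F_{x\bar z} = F_{\{x\}}^{\{z\}}$, $F_{\bar z} = F_{\emptyset}^{\{z\}}$, $F_z = F_{\{z\}}^{\emptyset}$. Two faces $F,G$ are parallel if $\mathrm{lin}(F)=\mathrm{lin}(G)$, where $\mathrm{lin}(F)$ is the linear subspace parallel to the affine hull of $F$. *)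

theory Defs
  imports "HOL-Analysis.Analysis"
begin

definition int_vec :: "real^'n \<Rightarrow> bool" where
  "int_vec v \<longleftrightarrow> (\<forall>i. v $ i \<in> \<int>)"

definition lattice_polytope :: "(real^'n) set \<Rightarrow> bool" where
  "lattice_polytope P \<longleftrightarrow> (\<exists>S. finite S \<and> (\<forall>v\<in>S. int_vec v) \<and> P = convex hull S)"

definition poly_edges :: "(real^'n) set \<Rightarrow> (real^'n) set set" where
  "poly_edges P = {E. E face_of P \<and> aff_dim E = 1}"

definition is_vertex :: "(real^'n) set \<Rightarrow> real^'n \<Rightarrow> bool" where
  "is_vertex P v \<longleftrightarrow> {v} face_of P"

definition simple_polytope :: "(real^'n) set \<Rightarrow> bool" where
  "simple_polytope P \<longleftrightarrow> aff_dim P = int CARD('n) \<and>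
     (\<forall>v. is_vertex P v \<longrightarrow> card {E \<in> poly_edges P. v \<in> E} = CARD('n))"

definition prim_edge_dir :: "real^'n \<Rightarrow> (real^'n) set \<Rightarrow> real^'n \<Rightarrow> bool" where
  "prim_edge_dir v E u \<longleftrightarrow> int_vec u \<and> u \<noteq> 0 \<and> (\<exists>t>0. v + t *\<^sub>R u \<in> E) \<and>
     (\<forall>s. 0 < s \<and> s < 1 \<longrightarrow> \<not> int_vec (s *\<^sub>R u))"

definition prim_edge_dirs :: "(real^'n) set \<Rightarrow> real^'n \<Rightarrow> (real^'n) set" where
  "prim_edge_dirs P v = {u. \<exists>E \<in> poly_edges P. v \<in> E \<and> prim_edge_dir v E u}"

definition lattice_basis :: "(real^'n) set \<Rightarrow> bool" where
  "lattice_basis B \<longleftrightarrow> finite B \<and> independent B \<and> (\<forall>b\<in>B. int_vec b) \<and>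
     (\<forall>w. int_vec w \<longrightarrow> (\<exists>c. (\<forall>b\<in>B. c b \<in> \<int>) \<and> w = (\<Sum>b\<in>B. c b *\<^sub>R b)))"

definition smooth_polytope :: "(real^'n) set \<Rightarrow> bool" where
  "smooth_polytope P \<longleftrightarrow> lattice_polytope P \<and> simple_polytope P \<and>
     (\<forall>v. is_vertex P v \<longrightarrow> lattice_basis (prim_edge_dirs P v))"

definition unit_cube :: "(real^'n) set" where
  "unit_cube = cbox 0 1"

definition cube_face :: "'n set \<Rightarrow> 'n set \<Rightarrow> (real^'n) set" where
  "cube_face I J = {p \<in> unit_cube. (\<forall>k\<in>I. p $ k = 0) \<and> (\<forall>k\<in>J. p $ k = 1)}"

definition face_poset_iso :: "((real^'n) set \<Rightarrow> (real^'n) set) \<Rightarrow> (real^'n) set \<Rightarrow> bool" where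
  "face_poset_iso \<phi> C \<longleftrightarrow> bij_betw \<phi> {F. F face_of unit_cube} {F. F face_of C} \<and>
     (\<forall>F G. F face_of unit_cube \<longrightarrow> G face_of unit_cube \<longrightarrow> (F \<subseteq> G \<longleftrightarrow> \<phi> F \<subseteq> \<phi> G))"

definition lin_space :: "(real^'n) set \<Rightarrow> (real^'n) set" where
  "lin_space F = {a - b | a b. a \<in> affine hull F \<and> b \<in> affine hull F}"

definition parallel_faces :: "(real^'n) set \<Rightarrow> (real^'n) set \<Rightarrow> bool" where
  "parallel_faces F G \<longleftrightarrow> lin_space F = lin_space G"

end

theory Submission
  imports Defs
begin

(* F_xz and F_yz are two distinct facets of F_z, and both contain the nonempty face F_xyz;
   hence lin(F_z) is spanned by lin(F_xz) and lin(F_yz). Likewise F_x\bar z and F_y\bar z are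
   distinct facets of F_\bar z meeting in F_xy\bar z, so lin(F_\bar z) is spanned by
   lin(F_x\bar z) and lin(F_y\bar z). The hypotheses identify the spanning pairs, so the spans
   agree. Only the face lattice of the cube enters: smoothness is used solely to know that C is
   a polytope, and d >= 3 already follows from x, y, z being distinct. *)

lemma mem_cube_face:
  "p \<in> cube_face I J \<longleftrightarrow>
     (\<forall>i. 0 \<le> p $ i \<and> p $ i \<le> 1) \<and> (\<forall>k\<in>I. p $ k = 0) \<and> (\<forall>k\<in>J. p $ k = 1)"
  by (simp add: cube_face_def unit_cube_def mem_box_cart)

definition cube_vertex :: "'n set \<Rightarrow> real^'n" where
  "cube_vertex K = (\<chi> i. if i \<in> K then 1 else 0)"

lemma cube_vertex_mem_cube_face: "cube_vertex K \<in> cube_face I J \<longleftrightarrow> J \<subseteq> K \<and> I \<inter> K = {}"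
  by (auto simp: mem_cube_face cube_vertex_def)

lemma cube_face_anti_mono: "I \<subseteq> I' \<Longrightarrow> J \<subseteq> J' \<Longrightarrow> cube_face I' J' \<subseteq> cube_face I J"
  by (auto simp: cube_face_def)

lemma convex_unit_cube: "convex (unit_cube :: (real^'n) set)"
  by (simp add: unit_cube_def)

lemma cube_face_face_of: "cube_face I J face_of (unit_cube :: (real^'n) set)"
proof -
  define zero where "zero k = unit_cube \<inter> {p::real^'n. axis k 1 \<bullet> p = 0}" for k
  define one where "one k = unit_cube \<inter> {p::real^'n. axis k 1 \<bullet> p = 1}" for k
  have zero_face: "zero k face_of unit_cube" for k
    unfolding zero_def
    by (rule face_of_Int_supporting_hyperplane_ge[OF convex_unit_cube])
       (simp add: unit_cube_def mem_box_cart inner_axis')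
  have one_face: "one k face_of unit_cube" for k
    unfolding one_def
    by (rule face_of_Int_supporting_hyperplane_le[OF convex_unit_cube])
       (simp add: unit_cube_def mem_box_cart inner_axis')
  have "cube_face I J = \<Inter> (insert unit_cube (zero ` I \<union> one ` J))"
    by (auto simp: cube_face_def zero_def one_def inner_axis')
  also have "\<dots> face_of unit_cube"
    by (rule face_of_Inter) (auto intro: zero_face one_face face_of_refl convex_unit_cube)
  finally show ?thesis .
qed

lemma cube_face_project_coord:
  assumes "q \<in> cube_face I J" "x \<notin> J"
  shows "q - (q $ x) *\<^sub>R axis x 1 \<in> cube_face (insert x I) J"
  using assms by (auto simp: mem_cube_face axis_def)

lemma face_of_cube_between_facet:
  fixes H :: "(real^'n) set"
  assumes "x \<notin> J" "H face_of unit_cube"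
    and below: "cube_face (insert x I) J \<subseteq> H" and above: "H \<subseteq> cube_face I J"
    and "H \<noteq> cube_face (insert x I) J"
  shows "H = cube_face I J"
proof
  let ?e = "axis x 1 :: real^'n"
  obtain p where "p \<in> H" and "p \<notin> cube_face (insert x I) J"
    using assms by blast
  define t where "t = p $ x"
  define p0 where "p0 = p - t *\<^sub>R ?e"
  from \<open>p \<in> H\<close> \<open>p \<notin> cube_face (insert x I) J\<close> above
  have "p \<in> cube_face I J" and "t > 0"
    by (auto simp: mem_cube_face less_le t_def)
  have p0: "p0 \<in> cube_face (insert x I) J"
    unfolding p0_def t_def using cube_face_project_coord \<open>p \<in> cube_face I J\<close> \<open>x \<notin> J\<close> .
  show "cube_face I J \<subseteq> H"
  proof
    fix q assume q: "q \<in> cube_face I J"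
    define s where "s = q $ x"
    define q0 where "q0 = q - s *\<^sub>R ?e"
    have "q0 \<in> H"
      unfolding q0_def s_def using cube_face_project_coord[OF q \<open>x \<notin> J\<close>] below by blast
    show "q \<in> H"
    proof (cases "s = 0 \<or> q = p0")
      case True
      then show ?thesis using \<open>q0 \<in> H\<close> p0 below by (auto simp: q0_def)
    next
      case False
      then have "s > 0" "q \<noteq> p0" using q by (auto simp: mem_cube_face s_def less_le)
      \<comment> \<open>the point m lies on the open segment from q to p0, and is also a convex
          combination of the points p and q0 of H\<close>
      define m where "m = (t / (t + s)) *\<^sub>R q + (s / (t + s)) *\<^sub>R p0"
      have "m = (s / (t + s)) *\<^sub>R p + (t / (t + s)) *\<^sub>R q0"
        using \<open>s > 0\<close> \<open>t > 0\<close> unfolding vec_eq_iff m_def p0_def q0_def by (simp add: field_simps)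
      moreover have "convex H" using \<open>H face_of unit_cube\<close> face_of_imp_convex by blast
      ultimately have "m \<in> H"
        using \<open>p \<in> H\<close> \<open>q0 \<in> H\<close> \<open>s > 0\<close> \<open>t > 0\<close>
        by (simp add: convex_def add_divide_distrib[symmetric])
      moreover have "m \<in> open_segment q p0"
        using \<open>q \<noteq> p0\<close> \<open>s > 0\<close> \<open>t > 0\<close> unfolding in_segment m_def
        by (intro conjI exI[of _ "s / (t + s)"]) (auto simp: field_simps)
      moreover have "q \<in> unit_cube" "p0 \<in> unit_cube"
        using q p0 by (auto simp: cube_face_def)
      ultimately show ?thesis using face_ofD[OF \<open>H face_of unit_cube\<close>] by blast
    qed
  qed
qed (fact above)

lemma lin_space_eq_span_translate:
  fixes S :: "(real^'n) set"
  assumes "a \<in> S"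
  shows "lin_space S = span ((+) (- a) ` S)"
proof -
  have hull: "affine hull S = (+) a ` span ((+) (- a) ` S)"
    using affine_hull_span_gen[OF hull_inc[OF assms]] by simp
  show ?thesis
  proof
    show "lin_space S \<subseteq> span ((+) (- a) ` S)"
      unfolding lin_space_def hull by (auto intro: span_diff)
    show "span ((+) (- a) ` S) \<subseteq> lin_space S"
    proof
      fix w assume "w \<in> span ((+) (- a) ` S)"
      then have "a + w \<in> affine hull S" unfolding hull by blast
      moreover have "a \<in> affine hull S" using assms by (simp add: hull_inc)
      ultimately show "w \<in> lin_space S"
        unfolding lin_space_def by (intro CollectI exI[of _ "a + w"] exI[of _ a]) simp
    qed
  qed
qed

lemma subspace_lin_space: "a \<in> S \<Longrightarrow> subspace (lin_space S)"
  by (simp add: lin_space_eq_span_translate)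

lemma dim_lin_space:
  fixes S :: "(real^'n) set"
  assumes "a \<in> S"
  shows "int (dim (lin_space S)) = aff_dim S"
  using aff_dim_eq_dim_subtract[OF hull_inc[OF assms]]
  by (simp add: lin_space_eq_span_translate[OF assms])

lemma lin_space_mono: "S \<subseteq> T \<Longrightarrow> lin_space S \<subseteq> lin_space T"
  unfolding lin_space_def using hull_mono by blast

lemma affine_hull_eq_translate_lin_space:
  fixes S :: "(real^'n) set"
  assumes "a \<in> S"
  shows "affine hull S = (+) a ` lin_space S"
  using affine_hull_span_gen[OF hull_inc[OF assms]]
  by (simp add: lin_space_eq_span_translate[OF assms])

lemma lin_space_neq_if_faces_meet:
  fixes C P Q :: "(real^'n) set"
  assumes "convex C" "P face_of C" "Q face_of C" "a \<in> P" "a \<in> Q" "P \<noteq> Q"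
  shows "lin_space P \<noteq> lin_space Q"
proof
  assume "lin_space P = lin_space Q"
  then have "affine hull P = affine hull Q"
    using affine_hull_eq_translate_lin_space assms(4,5) by metis
  then have "P = Q"
    using face_of_imp_eq_affine_Int[OF assms(1)] assms(2,3) by metis
  with \<open>P \<noteq> Q\<close> show False ..
qed

lemma span_Un_distinct_hyperplanes:
  fixes A B G :: "'a::euclidean_space set"
  assumes "subspace A" "subspace B" "subspace G" "A \<subseteq> G" "B \<subseteq> G"
    and "dim A + 1 = dim G" "dim B + 1 = dim G" "A \<noteq> B"
  shows "span (A \<union> B) = G"
proof (rule subspace_dim_equal)
  show "span (A \<union> B) \<subseteq> G"
    using assms by (simp add: span_minimal)
  have "A \<subseteq> span (A \<union> B)" "B \<subseteq> span (A \<union> B)"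
    by (auto intro: span_base)
  have "\<not> dim (span (A \<union> B)) \<le> dim A"
  proof
    assume le: "dim (span (A \<union> B)) \<le> dim A"
    then have "A = span (A \<union> B)"
      using subspace_dim_equal[OF \<open>subspace A\<close> subspace_span \<open>A \<subseteq> span (A \<union> B)\<close>] by simp
    moreover have "B = span (A \<union> B)"
      using subspace_dim_equal[OF \<open>subspace B\<close> subspace_span \<open>B \<subseteq> span (A \<union> B)\<close>] le assms(6,7)
      by simp
    ultimately show False using \<open>A \<noteq> B\<close> by simp
  qed
  then show "dim G \<le> dim (span (A \<union> B))"
    using assms(6) by simp
qed (use assms in auto)

lemma lin_space_eq_span_codim_one_faces:
  fixes C A B G :: "(real^'n) set"
  assumes "convex C" "A face_of C" "B face_of C" "A \<noteq> B" "a \<in> A" "a \<in> B"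
    and "A \<subseteq> G" "B \<subseteq> G" "aff_dim A = aff_dim G - 1" "aff_dim B = aff_dim G - 1"
  shows "lin_space G = span (lin_space A \<union> lin_space B)"
proof -
  have "a \<in> G" using assms by blast
  have "span (lin_space A \<union> lin_space B) = lin_space G"
  proof (rule span_Un_distinct_hyperplanes)
    show "subspace (lin_space A)" "subspace (lin_space B)" "subspace (lin_space G)"
      using subspace_lin_space \<open>a \<in> A\<close> \<open>a \<in> B\<close> \<open>a \<in> G\<close> by blast+
    show "lin_space A \<subseteq> lin_space G" "lin_space B \<subseteq> lin_space G"
      using lin_space_mono assms(7,8) by blast+
    show "dim (lin_space A) + 1 = dim (lin_space G)" "dim (lin_space B) + 1 = dim (lin_space G)"
      using dim_lin_space[OF \<open>a \<in> A\<close>] dim_lin_space[OF \<open>a \<in> B\<close>] dim_lin_space[OF \<open>a \<in> G\<close>]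
        assms(9,10) by linarith+
    show "lin_space A \<noteq> lin_space B"
      using lin_space_neq_if_faces_meet assms(1-6) by blast
  qed
  then show ?thesis ..
qed

locale combinatorial_cube =
  fixes \<phi> :: "(real^'n) set \<Rightarrow> (real^'n) set" and C :: "(real^'n) set"
  assumes iso: "face_poset_iso \<phi> C" and polytope: "polytope C"
begin

lemma face_of_image: "F face_of unit_cube \<Longrightarrow> \<phi> F face_of C"
  using iso bij_betw_apply unfolding face_poset_iso_def by fastforce

lemma ex_preimage: "K face_of C \<Longrightarrow> \<exists>H. H face_of unit_cube \<and> \<phi> H = K"
  using iso unfolding face_poset_iso_def bij_betw_def by (metis (mono_tags) imageE mem_Collect_eq)

lemma image_subset_iff:
  "F face_of unit_cube \<Longrightarrow> G face_of unit_cube \<Longrightarrow> \<phi> F \<subseteq> \<phi> G \<longleftrightarrow> F \<subseteq> G"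
  using iso unfolding face_poset_iso_def by blast

lemma image_eq_iff:
  "F face_of unit_cube \<Longrightarrow> G face_of unit_cube \<Longrightarrow> \<phi> F = \<phi> G \<longleftrightarrow> F = G"
  using image_subset_iff by blast

lemma image_empty: "\<phi> {} = {}"
proof -
  obtain H where H: "H face_of unit_cube" "\<phi> H = {}"
    using ex_preimage[OF empty_face_of] by blast
  then have "H = {}"
    using image_subset_iff[OF H(1) empty_face_of] by simp
  with H show ?thesis by simp
qed

lemma image_eq_empty_iff: "F face_of unit_cube \<Longrightarrow> \<phi> F = {} \<longleftrightarrow> F = {}"
  using image_eq_iff[OF _ empty_face_of] image_empty by metis

text \<open>Facets of the polytope phi(F_I^J) correspond to faces of the cube, and
  face_of_cube_between_facet leaves only phi(F_{I+x}^J) as a facet containing it.\<close>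

lemma aff_dim_image_cube_facet:
  assumes "x \<notin> I \<union> J" "I \<inter> J = {}"
  shows "aff_dim (\<phi> (cube_face (insert x I) J)) = aff_dim (\<phi> (cube_face I J)) - 1"
proof -
  let ?F' = "cube_face (insert x I) J" and ?F = "cube_face I J"
  have "cube_vertex J \<in> ?F'" "cube_vertex (insert x J) \<in> ?F - ?F'"
    using assms by (auto simp: cube_vertex_mem_cube_face)
  then have "?F' \<noteq> {}" "?F' \<noteq> ?F" by blast+
  have "\<phi> ?F face_of C" "\<phi> ?F' face_of C" by (simp_all add: face_of_image cube_face_face_of)
  have sub: "\<phi> ?F' \<subseteq> \<phi> ?F"
    by (simp add: image_subset_iff cube_face_face_of cube_face_anti_mono subset_insertI)
  have "polyhedron (\<phi> ?F)"
    using face_of_polytope_polytope[OF polytope \<open>\<phi> ?F face_of C\<close>] polytope_imp_polyhedron by blast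
  moreover have "\<phi> ?F' face_of \<phi> ?F"
    using face_of_subset[OF \<open>\<phi> ?F' face_of C\<close> sub face_of_imp_subset[OF \<open>\<phi> ?F face_of C\<close>]] .
  moreover have "\<phi> ?F' \<noteq> {}" "\<phi> ?F' \<noteq> \<phi> ?F"
    using \<open>?F' \<noteq> {}\<close> \<open>?F' \<noteq> ?F\<close> by (simp_all add: image_eq_empty_iff image_eq_iff cube_face_face_of)
  ultimately obtain K where K: "K facet_of \<phi> ?F" "\<phi> ?F' \<subseteq> K"
    using face_of_polyhedron_subset_facet by blast
  then have "K face_of \<phi> ?F" "K \<noteq> \<phi> ?F"
    by (auto simp: facet_of_def)
  then have "K face_of C" "K \<subseteq> \<phi> ?F"
    using \<open>\<phi> ?F face_of C\<close> face_of_trans face_of_imp_subset by blast+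
  then obtain H where H: "H face_of unit_cube" "\<phi> H = K"
    using ex_preimage by blast
  have "?F' \<subseteq> H"
    using K(2) H image_subset_iff[OF cube_face_face_of H(1)] by simp
  moreover have "H \<subseteq> ?F"
    using \<open>K \<subseteq> \<phi> ?F\<close> H image_subset_iff[OF H(1) cube_face_face_of] by simp
  moreover have "H \<noteq> ?F"
    using \<open>K \<noteq> \<phi> ?F\<close> H(2) by blast
  ultimately have "H = ?F'"
    using face_of_cube_between_facet[of x J H I] assms(1) H(1) by blast
  with H K(1) show ?thesis by (simp add: facet_of_def)
qed

lemma lin_space_image_cube_face_eq_span:
  assumes "x \<noteq> y" "x \<notin> I \<union> J" "y \<notin> I \<union> J" "I \<inter> J = {}"
  shows "lin_space (\<phi> (cube_face I J)) =
    span (lin_space (\<phi> (cube_face (insert x I) J)) \<union> lin_space (\<phi> (cube_face (insert y I) J)))"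
proof -
  have "cube_vertex J \<in> cube_face (insert x (insert y I)) J"
    "cube_vertex (insert y J) \<in> cube_face (insert x I) J - cube_face (insert y I) J"
    using assms by (auto simp: cube_vertex_mem_cube_face)
  then have "cube_face (insert x (insert y I)) J \<noteq> {}"
    "cube_face (insert x I) J \<noteq> cube_face (insert y I) J"
    by blast+
  then obtain a where a: "a \<in> \<phi> (cube_face (insert x (insert y I)) J)"
    using image_eq_empty_iff[OF cube_face_face_of] by blast
  have "\<phi> (cube_face (insert x (insert y I)) J) \<subseteq> \<phi> (cube_face (insert x I) J)"
    "\<phi> (cube_face (insert x (insert y I)) J) \<subseteq> \<phi> (cube_face (insert y I) J)"
    by (simp_all add: image_subset_iff cube_face_face_of) (auto simp: cube_face_def)
  with a have "a \<in> \<phi> (cube_face (insert x I) J)" "a \<in> \<phi> (cube_face (insert y I) J)"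
    by blast+
  then show ?thesis
  proof (rule lin_space_eq_span_codim_one_faces[rotated 4])
    show "convex C" by (simp add: polytope polytope_imp_convex)
    show "\<phi> (cube_face (insert x I) J) \<noteq> \<phi> (cube_face (insert y I) J)"
      using \<open>cube_face (insert x I) J \<noteq> cube_face (insert y I) J\<close>
      by (simp add: image_eq_iff cube_face_face_of)
    show "\<phi> (cube_face (insert x I) J) face_of C" "\<phi> (cube_face (insert y I) J) face_of C"
      by (simp_all add: face_of_image cube_face_face_of)
    show "\<phi> (cube_face (insert x I) J) \<subseteq> \<phi> (cube_face I J)"
      "\<phi> (cube_face (insert y I) J) \<subseteq> \<phi> (cube_face I J)"
      by (simp_all add: image_subset_iff cube_face_face_of cube_face_anti_mono subset_insertI)
    show "aff_dim (\<phi> (cube_face (insert x I) J)) = aff_dim (\<phi> (cube_face I J)) - 1"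
      "aff_dim (\<phi> (cube_face (insert y I) J)) = aff_dim (\<phi> (cube_face I J)) - 1"
      using assms by (simp_all add: aff_dim_image_cube_facet)
  qed
qed

end

theorem corollary3p2:
  fixes C :: "(real^'n) set" and \<phi> :: "(real^'n) set \<Rightarrow> (real^'n) set" and x y z :: 'n
  assumes "CARD('n) \<ge> 3"
    and "smooth_polytope C"
    and "face_poset_iso \<phi> C"
    and "x \<noteq> y" "y \<noteq> z" "x \<noteq> z"
    and "parallel_faces (\<phi> (cube_face {x, z} {})) (\<phi> (cube_face {x} {z}))"
    and "parallel_faces (\<phi> (cube_face {y, z} {})) (\<phi> (cube_face {y} {z}))"
  shows "parallel_faces (\<phi> (cube_face {z} {})) (\<phi> (cube_face {} {z}))"
proof -
  have "polytope C"
    using assms(2) unfolding smooth_polytope_def lattice_polytope_def polytope_def by blast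
  with assms(3) interpret combinatorial_cube \<phi> C
    by unfold_locales
  have "lin_space (\<phi> (cube_face {z} {})) =
      span (lin_space (\<phi> (cube_face {x, z} {})) \<union> lin_space (\<phi> (cube_face {y, z} {})))"
    using lin_space_image_cube_face_eq_span[of x y "{z}" "{}"] assms(4-6) by simp
  moreover have "lin_space (\<phi> (cube_face {} {z})) =
      span (lin_space (\<phi> (cube_face {x} {z})) \<union> lin_space (\<phi> (cube_face {y} {z})))"
    using lin_space_image_cube_face_eq_span[of x y "{}" "{z}"] assms(4-6) by simp
  ultimately show ?thesis
    using assms(7,8) by (simp add: parallel_faces_def)
qed

end
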